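(* Let $f,g:\mathbb{R}^n\to\mathbb{R}$ be probability density functions, regarded as elements of the normed space $(\mathcal{L}_1(\mathbb{R}^n),\|\cdot\|_{\mathcal{L}_1})$. Then $\mathcal{M}^g\subset\mathcal{L}_1$ and $g_k\star f\in\mathcal{L}_1$ for every $k\in(0,\infty)$. Furthermore, for every $k\in(0,\infty)$ there exists a sequence $\{h_m^g\}_{m=1}^\infty\subset\mathcal{M}^g$ such that \[ \lim_{m\to\infty}\left\Vert g_k\star f-h_m^g\right\Vert_{\mathcal{L}_1}=0 . \]
   Context: A probability density function (PDF) is a measurable $g\ge 0$ with $\int g\,\mathrm{d}\lambda=1$ ($\lambda$ Lebesgue measure). For $k>0$, $g_k(x)=k^n g(kx)$ is the dilate of $g$, and $(g_k\star f)(x)=\int g_k(x-y)f(y)\,\mathrm{d}\lambda(y)$. The class $\mathcal{M}^g=\bigcup_{m\in\mathbb{N}}\mathcal{M}^g_m$, where $\mathcal{M}^{g}_m=\{ \sum_{i=1}^{m}c_{i}\sigma_{i}^{-n}g((\cdot-\mu_{i})/\sigma_{i}) :\mu_{i}\in\mathbb{R}^{n},\ \sigma_{i}>0,\ c_i\ge0,\ \sum_i c_i=1\}$ is the set of $m$-component location-scale finite mixtures of $g$. *)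

theory Defs
  imports "HOL-Analysis.Analysis"
begin

definition is_pdf :: "('a::euclidean_space \<Rightarrow> real) \<Rightarrow> bool" where
  "is_pdf g \<longleftrightarrow> g \<in> borel_measurable lborel \<and> (\<forall>x. 0 \<le> g x)
     \<and> (\<integral>\<^sup>+ x. ennreal (g x) \<partial>lborel) = 1"

definition dilate :: "real \<Rightarrow> ('a::euclidean_space \<Rightarrow> real) \<Rightarrow> 'a \<Rightarrow> real" where
  "dilate k g x = k ^ DIM('a) * g (k *\<^sub>R x)"

definition conv :: "('a::euclidean_space \<Rightarrow> real) \<Rightarrow> ('a \<Rightarrow> real) \<Rightarrow> 'a \<Rightarrow> real" where
  "conv g f x = (\<integral> y. g (x - y) * f y \<partial>lborel)"

definition mixtures_m :: "nat \<Rightarrow> ('a::euclidean_space \<Rightarrow> real) \<Rightarrow> ('a \<Rightarrow> real) set" where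
  "mixtures_m m g = {(\<lambda>x. \<Sum>i<m. c i * inverse (\<sigma> i) ^ DIM('a) * g (inverse (\<sigma> i) *\<^sub>R (x - \<mu> i)))
     | c \<sigma> \<mu>. (\<forall>i<m. 0 < \<sigma> i \<and> 0 \<le> c i) \<and> (\<Sum>i<m. c i) = 1}"

definition mixtures :: "('a::euclidean_space \<Rightarrow> real) \<Rightarrow> ('a \<Rightarrow> real) set" where
  "mixtures g = (\<Union>m. mixtures_m m g)"

end

theory Submission
  imports Defs
begin

(*
  Translation is continuous in L1: for integrable G, L1_shift G t tends to 0 as t tends to 0.
  This holds for indicators of sets of finite measure by inner and outer regularity of
  Lebesgue measure, and it survives sums, scalar multiples and L1 limits, hence holds for
  every integrable function.

  Replacing the integration variable y in (conv G f) x = \<integral> G (x - y) f y dy by the value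
  \<phi> y of a simple function turns the convolution into a finite sum of translates of G,
  weighted by the f-masses of the level sets of \<phi>. By Fubini its L1 distance to conv G f
  is at most \<integral> |f y| L1_shift G (y - \<phi> y) dy, which tends to 0 by dominated
  convergence when \<phi> runs through simple functions converging pointwise to the identity.
  For G = g_k these sums are mixtures of g with the common scale 1/k.
*)

lemma tendsto_0_ennrealI:
  fixes X :: "'b \<Rightarrow> ennreal"
  assumes "\<And>e. e > 0 \<Longrightarrow> eventually (\<lambda>x. X x \<le> ennreal e) F"
  shows "(X \<longlongrightarrow> 0) F"
proof (rule order_tendstoI)
  fix a :: ennreal
  assume "0 < a"
  then obtain b where b: "0 < b" "b < a"
    using dense by blast
  then obtain e where e: "b = ennreal e" "e > 0"
    by (cases b rule: ennreal_cases) auto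
  show "eventually (\<lambda>x. X x < a) F"
    using assms[OF e(2)] by eventually_elim (use b e in auto)
qed simp

lemma nn_integral_lborel_translate:
  fixes t :: "'a::euclidean_space"
  assumes [measurable]: "u \<in> borel_measurable borel"
  shows "(\<integral>\<^sup>+x. u (x + t) \<partial>lborel) = (\<integral>\<^sup>+x. u x \<partial>lborel)"
proof -
  have "(\<integral>\<^sup>+x. u x \<partial>lborel) = (\<integral>\<^sup>+x. u x \<partial>distr lborel borel ((+) t))"
    by (simp add: lborel_distr_plus)
  also have "\<dots> = (\<integral>\<^sup>+x. u (t + x) \<partial>lborel)"
    by (subst nn_integral_distr) auto
  finally show ?thesis
    by (simp add: add.commute)
qed

lemma emeasure_diff_ball_tendsto_0:
  fixes A :: "'a::euclidean_space set"
  assumes [measurable]: "A \<in> sets borel" and "emeasure lborel A < \<infinity>"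
  shows "(\<lambda>n. emeasure lborel (A - ball 0 (real n))) \<longlonglongrightarrow> 0"
proof -
  have "emeasure lborel (A - ball 0 (real n)) < \<infinity>" for n
    using emeasure_mono[of "A - ball 0 (real n)" A lborel] assms(2) by auto
  then have "(\<lambda>n. emeasure lborel (A - ball 0 (real n))) \<longlonglongrightarrow> emeasure lborel (\<Inter>n. A - ball 0 (real n))"
    using assms by (intro Lim_emeasure_decseq) (auto simp: decseq_def top.not_eq_extremum)
  moreover have "x \<notin> (\<Inter>n. A - ball 0 (real n))" for x :: 'a
    using reals_Archimedean2[of "norm x"] by auto
  ultimately show ?thesis
    by (metis emeasure_empty equals0I)
qed

lemma inner_regular_lborel:
  fixes A :: "'a::euclidean_space set"
  assumes [measurable]: "A \<in> sets borel" and "emeasure lborel A < \<infinity>" and "e > 0"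
  obtains K where "compact K" "K \<subseteq> A" "emeasure lborel (A - K) < ennreal e"
proof -
  obtain V where V: "open V" "- A \<subseteq> V" "emeasure lborel (V - - A) < ennreal (e/2)"
    using outer_regular_lborel[of "- A" "e/2"] \<open>e > 0\<close> by auto
  obtain n where n: "emeasure lborel (A - ball 0 (real n)) < ennreal (e/2)"
    using order_tendstoD(2)[OF emeasure_diff_ball_tendsto_0, of A "ennreal (e/2)"] assms
    by (auto simp: eventually_sequentially)
  show ?thesis
  proof
    show "compact (- V \<inter> cball 0 (real n))"
      using V(1) by (intro closed_Int_compact) auto
    show "- V \<inter> cball 0 (real n) \<subseteq> A"
      using V(2) by auto
    have [measurable]: "V \<in> sets borel"
      using V(1) by auto
    have "emeasure lborel (A - (- V \<inter> cball 0 (real n)))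
        \<le> emeasure lborel ((V - - A) \<union> (A - ball 0 (real n)))"
      by (intro emeasure_mono) auto
    also have "\<dots> \<le> emeasure lborel (V - - A) + emeasure lborel (A - ball 0 (real n))"
      by (intro emeasure_subadditive) auto
    also have "\<dots> < ennreal (e/2) + ennreal (e/2)"
      using V(3) n by (rule add_strict_mono)
    also have "\<dots> = ennreal e"
      using \<open>e > 0\<close> by (simp flip: ennreal_plus)
    finally show "emeasure lborel (A - (- V \<inter> cball 0 (real n))) < ennreal e" .
  qed
qed

definition L1_shift :: "('a::euclidean_space \<Rightarrow> real) \<Rightarrow> 'a \<Rightarrow> ennreal" where
  "L1_shift f t = (\<integral>\<^sup>+x. ennreal \<bar>f (x + t) - f x\<bar> \<partial>lborel)"

lemma L1_shift_0 [simp]: "L1_shift f 0 = 0"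
  by (simp add: L1_shift_def)

lemma L1_shift_add_le:
  fixes f g :: "'a::euclidean_space \<Rightarrow> real"
  assumes [measurable]: "f \<in> borel_measurable borel" "g \<in> borel_measurable borel"
  shows "L1_shift (\<lambda>x. f x + g x) t \<le> L1_shift f t + L1_shift g t"
proof -
  have "L1_shift (\<lambda>x. f x + g x) t
      \<le> (\<integral>\<^sup>+x. ennreal \<bar>f (x + t) - f x\<bar> + ennreal \<bar>g (x + t) - g x\<bar> \<partial>lborel)"
    unfolding L1_shift_def by (intro nn_integral_mono) (simp flip: ennreal_plus)
  also have "\<dots> = L1_shift f t + L1_shift g t"
    unfolding L1_shift_def by (rule nn_integral_add) auto
  finally show ?thesis .
qed

lemma L1_shift_mult_right:
  fixes f :: "'a::euclidean_space \<Rightarrow> real"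
  assumes [measurable]: "f \<in> borel_measurable borel"
  shows "L1_shift (\<lambda>x. f x * c) t = ennreal \<bar>c\<bar> * L1_shift f t"
proof -
  have "ennreal \<bar>f (x + t) * c - f x * c\<bar> = ennreal \<bar>c\<bar> * ennreal \<bar>f (x + t) - f x\<bar>" for x
    by (simp add: ennreal_mult[symmetric] abs_mult[symmetric] algebra_simps)
  then show ?thesis
    unfolding L1_shift_def by (simp add: nn_integral_cmult)
qed

lemma L1_shift_le_L1_dist:
  fixes f s :: "'a::euclidean_space \<Rightarrow> real"
  assumes [measurable]: "f \<in> borel_measurable borel" "s \<in> borel_measurable borel"
  shows "L1_shift f t \<le> L1_shift s t + 2 * (\<integral>\<^sup>+x. ennreal \<bar>f x - s x\<bar> \<partial>lborel)"
proof -
  have "L1_shift f t \<le> (\<integral>\<^sup>+x. ennreal \<bar>f (x + t) - s (x + t)\<bar> + ennreal \<bar>s (x + t) - s x\<bar>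
      + ennreal \<bar>f x - s x\<bar> \<partial>lborel)"
    unfolding L1_shift_def by (intro nn_integral_mono) (simp flip: ennreal_plus)
  also have "\<dots> = (\<integral>\<^sup>+x. ennreal \<bar>f (x + t) - s (x + t)\<bar> \<partial>lborel) + L1_shift s t
      + (\<integral>\<^sup>+x. ennreal \<bar>f x - s x\<bar> \<partial>lborel)"
    unfolding L1_shift_def by (simp add: nn_integral_add)
  also have "(\<integral>\<^sup>+x. ennreal \<bar>f (x + t) - s (x + t)\<bar> \<partial>lborel) = (\<integral>\<^sup>+x. ennreal \<bar>f x - s x\<bar> \<partial>lborel)"
    by (rule nn_integral_lborel_translate[where u="\<lambda>x. ennreal \<bar>f x - s x\<bar>"]) measurable
  finally show ?thesis
    by (simp add: mult_2 add_ac)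
qed

lemma L1_shift_indicator_le:
  fixes A K U :: "'a::euclidean_space set"
  assumes [measurable]: "A \<in> sets borel" "K \<in> sets borel" "U \<in> sets borel"
    and "K \<subseteq> A" "A \<subseteq> U" "\<And>x. x \<in> K \<Longrightarrow> x + t \<in> U" "\<And>x. x \<in> K \<Longrightarrow> x - t \<in> U"
  shows "L1_shift (indicator A) t \<le> 2 * (emeasure lborel (A - K) + emeasure lborel (U - A))"
proof -
  have "ennreal \<bar>indicator A (x + t) - indicator A x\<bar> \<le> indicator (A - K) (x + t)
      + indicator (U - A) x + indicator (A - K) x + indicator (U - A) (x + t)" for x
    using assms(4-5) assms(6)[of x] assms(7)[of "x + t"] by (auto simp: indicator_def)
  then have "L1_shift (indicator A) t \<le> (\<integral>\<^sup>+x. indicator (A - K) (x + t)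
      + indicator (U - A) x + indicator (A - K) x + indicator (U - A) (x + t) \<partial>lborel)"
    unfolding L1_shift_def by (intro nn_integral_mono)
  also have "\<dots> = (\<integral>\<^sup>+x. indicator (A - K) (x + t) \<partial>lborel) + emeasure lborel (U - A)
      + emeasure lborel (A - K) + (\<integral>\<^sup>+x. indicator (U - A) (x + t) \<partial>lborel)"
    by (simp add: nn_integral_add)
  also have "(\<integral>\<^sup>+x. indicator (A - K) (x + t) \<partial>lborel) = emeasure lborel (A - K)"
    by (subst nn_integral_lborel_translate) auto
  also have "(\<integral>\<^sup>+x. indicator (U - A) (x + t) \<partial>lborel) = emeasure lborel (U - A)"
    by (subst nn_integral_lborel_translate) auto
  finally show ?thesis
    by (simp add: mult_2 add_ac)
qed

lemma isCont_L1_shift_indicator: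
  fixes A :: "'a::euclidean_space set"
  assumes A[measurable]: "A \<in> sets borel" and "emeasure lborel A < \<infinity>"
  shows "isCont (L1_shift (indicator A :: 'a \<Rightarrow> real)) 0"
  unfolding isCont_def L1_shift_0
proof (rule tendsto_0_ennrealI)
  fix e :: real
  assume "e > 0"
  obtain K where K: "compact K" "K \<subseteq> A" "emeasure lborel (A - K) < ennreal (e/4)"
    using inner_regular_lborel[of A "e/4"] assms \<open>e > 0\<close> by auto
  obtain U where U: "open U" "A \<subseteq> U" "emeasure lborel (U - A) < ennreal (e/4)"
    using outer_regular_lborel[OF A, of "e/4"] \<open>e > 0\<close> by auto
  have "closed (- U)" "K \<inter> - U = {}"
    using K U by auto
  then obtain d where "d > 0" and d: "\<And>x y. x \<in> K \<Longrightarrow> y \<notin> U \<Longrightarrow> d \<le> dist x y"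
    using separate_compact_closed[OF \<open>compact K\<close>] by (metis ComplI)
  have "L1_shift (indicator A) t \<le> ennreal e" if "norm t < d" for t
  proof -
    have "x + t \<in> U" "x - t \<in> U" if "x \<in> K" for x
      using d[OF that, of "x + t"] d[OF that, of "x - t"] \<open>norm t < d\<close> by (auto simp: dist_norm)
    then have "L1_shift (indicator A) t \<le> 2 * (emeasure lborel (A - K) + emeasure lborel (U - A))"
      using K U by (intro L1_shift_indicator_le) (auto intro: borel_compact)
    also have "\<dots> \<le> 2 * (ennreal (e/4) + ennreal (e/4))"
      using K U by (intro mult_left_mono add_mono) auto
    also have "\<dots> = ennreal e"
      using \<open>e > 0\<close> by (simp add: mult_2 flip: ennreal_plus)
    finally show ?thesis .
  qed
  then show "eventually (\<lambda>t. L1_shift (indicator A) t \<le> ennreal e) (at 0)"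
    using \<open>d > 0\<close> by (auto simp: eventually_at dist_norm)
qed

lemma isCont_L1_shift_add:
  fixes f g :: "'a::euclidean_space \<Rightarrow> real"
  assumes "f \<in> borel_measurable borel" "g \<in> borel_measurable borel"
    and "isCont (L1_shift f) 0" "isCont (L1_shift g) 0"
  shows "isCont (L1_shift (\<lambda>x. f x + g x)) 0"
proof -
  have sum: "((\<lambda>t. L1_shift f t + L1_shift g t) \<longlongrightarrow> 0) (at 0)"
    using tendsto_add[OF assms(3,4)[unfolded isCont_def]] by simp
  show ?thesis
    unfolding isCont_def L1_shift_0
    by (rule tendsto_sandwich[OF _ _ tendsto_const sum]) (simp_all add: L1_shift_add_le assms)
qed

lemma isCont_L1_shift_mult_right:
  fixes f :: "'a::euclidean_space \<Rightarrow> real"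
  assumes "f \<in> borel_measurable borel" and "isCont (L1_shift f) 0"
  shows "isCont (L1_shift (\<lambda>x. f x * c)) 0"
proof -
  have "L1_shift (\<lambda>x. f x * c) = (\<lambda>t. ennreal \<bar>c\<bar> * L1_shift f t)"
    by (simp add: fun_eq_iff L1_shift_mult_right[OF assms(1)])
  then show ?thesis
    using ennreal_tendsto_cmult[of "ennreal \<bar>c\<bar>", OF _ assms(2)[unfolded isCont_def]]
    by (simp add: isCont_def)
qed

lemma isCont_L1_shift_L1_limit:
  fixes f :: "'a::euclidean_space \<Rightarrow> real"
  assumes [measurable]: "f \<in> borel_measurable borel" "\<And>i. s i \<in> borel_measurable borel"
    and cont: "\<And>i. isCont (L1_shift (s i)) 0"
    and lim: "(\<lambda>i. \<integral>\<^sup>+x. ennreal \<bar>f x - s i x\<bar> \<partial>lborel) \<longlonglongrightarrow> 0"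
  shows "isCont (L1_shift f) 0"
  unfolding isCont_def L1_shift_0
proof (rule tendsto_0_ennrealI)
  fix e :: real
  assume "e > 0"
  have "(\<lambda>i. 2 * (\<integral>\<^sup>+x. ennreal \<bar>f x - s i x\<bar> \<partial>lborel)) \<longlonglongrightarrow> 0"
    using ennreal_tendsto_cmult[OF _ lim, of 2] by simp
  then obtain i where i: "2 * (\<integral>\<^sup>+x. ennreal \<bar>f x - s i x\<bar> \<partial>lborel) < ennreal (e/2)"
    using order_tendstoD(2)[of _ 0 sequentially "ennreal (e/2)"] \<open>e > 0\<close>
    by (auto simp: eventually_sequentially)
  have "eventually (\<lambda>t. L1_shift (s i) t < ennreal (e/2)) (at 0)"
    using order_tendstoD(2)[OF cont[of i, unfolded isCont_def], of "ennreal (e/2)"] \<open>e > 0\<close>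
    by simp
  then show "eventually (\<lambda>t. L1_shift f t \<le> ennreal e) (at 0)"
  proof eventually_elim
    case (elim t)
    have "L1_shift f t \<le> L1_shift (s i) t + 2 * (\<integral>\<^sup>+x. ennreal \<bar>f x - s i x\<bar> \<partial>lborel)"
      by (rule L1_shift_le_L1_dist) auto
    also have "\<dots> \<le> ennreal (e/2) + ennreal (e/2)"
      using elim i by (intro add_mono) auto
    also have "\<dots> = ennreal e"
      using \<open>e > 0\<close> by (simp flip: ennreal_plus)
    finally show ?case .
  qed
qed

lemma isCont_L1_shift:
  fixes f :: "'a::euclidean_space \<Rightarrow> real"
  assumes "integrable lborel f"
  shows "isCont (L1_shift f) 0"
  using assms
proof (induct rule: integrable_induct)
  case (base A c)
  then show ?case
    by (simp add: isCont_L1_shift_mult_right isCont_L1_shift_indicator)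
next
  case (add f g)
  then show ?case
    by (intro isCont_L1_shift_add) auto
next
  case (lim f s)
  have [measurable]: "f \<in> borel_measurable borel" "\<And>i. s i \<in> borel_measurable borel"
    using lim by auto
  have "(\<lambda>i. \<integral>\<^sup>+x. norm (f x - s i x) \<partial>lborel) \<longlonglongrightarrow> 0"
  proof (rule nn_integral_dominated_convergence_norm[where w="\<lambda>x. 2 * norm (f x)"])
    have "(\<integral>\<^sup>+x. ennreal (2 * norm (f x)) \<partial>lborel) = 2 * (\<integral>\<^sup>+x. ennreal (norm (f x)) \<partial>lborel)"
      by (subst nn_integral_cmult[symmetric]) (auto simp: ennreal_mult)
    then show "(\<integral>\<^sup>+x. ennreal (2 * norm (f x)) \<partial>lborel) < \<infinity>"
      using lim(5) by (simp add: integrable_iff_bounded ennreal_mult_less_top)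
  qed (use lim in auto)
  then show ?case
    using lim(2) by (intro isCont_L1_shift_L1_limit[of f s]) auto
qed

lemma is_pdfD:
  assumes "is_pdf f"
  shows "f \<in> borel_measurable borel" "0 \<le> f x" "(\<integral>\<^sup>+x. ennreal (f x) \<partial>lborel) = 1"
  using assms by (auto simp: is_pdf_def)

lemma integrable_pdf:
  assumes "is_pdf f"
  shows "integrable lborel f"
  using is_pdfD[OF assms] by (auto simp: integrable_iff_bounded)

lemma integral_pdf:
  assumes "is_pdf f"
  shows "(\<integral>x. f x \<partial>lborel) = 1"
  using is_pdfD[OF assms] by (subst integral_eq_nn_integral) auto

lemma nn_integral_lborel_affine:
  fixes u :: "'a::euclidean_space \<Rightarrow> ennreal"
  assumes [measurable]: "u \<in> borel_measurable borel" and "c \<noteq> 0"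
  shows "(\<integral>\<^sup>+x. u x \<partial>lborel) = ennreal (\<bar>c\<bar> ^ DIM('a)) * (\<integral>\<^sup>+x. u (t + c *\<^sub>R x) \<partial>lborel)"
  by (subst lborel_affine[OF \<open>c \<noteq> 0\<close>, of t])
     (simp add: nn_integral_density nn_integral_distr nn_integral_cmult)

lemma is_pdf_affine:
  fixes g :: "'a::euclidean_space \<Rightarrow> real"
  assumes g: "is_pdf g" and "s > 0"
  shows "is_pdf (\<lambda>x. s ^ DIM('a) * g (s *\<^sub>R (x - \<mu>)))"
proof -
  note [measurable] = is_pdfD(1)[OF g]
  have "(\<integral>\<^sup>+x. ennreal (s ^ DIM('a) * g (s *\<^sub>R (x - \<mu>))) \<partial>lborel)
      = ennreal (\<bar>s\<bar> ^ DIM('a)) * (\<integral>\<^sup>+x. ennreal (g (- s *\<^sub>R \<mu> + s *\<^sub>R x)) \<partial>lborel)"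
    using \<open>s > 0\<close> is_pdfD(2)[OF g] by (subst nn_integral_cmult[symmetric])
      (auto simp: ennreal_mult scaleR_diff_right intro!: nn_integral_cong)
  also have "\<dots> = (\<integral>\<^sup>+x. ennreal (g x) \<partial>lborel)"
    using \<open>s > 0\<close> by (subst nn_integral_lborel_affine[where c=s and t="- s *\<^sub>R \<mu>"]) auto
  finally show ?thesis
    using \<open>s > 0\<close> is_pdfD[OF g] by (auto simp: is_pdf_def)
qed

lemma is_pdf_dilate:
  assumes "is_pdf g" and "k > 0"
  shows "is_pdf (dilate k g)"
  using is_pdf_affine[OF assms, of 0] by (simp add: dilate_def[abs_def])

lemma integrable_mixture:
  assumes "is_pdf g" and "h \<in> mixtures g"
  shows "integrable lborel h"
proof -
  obtain m where "h \<in> mixtures_m m g"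
    using \<open>h \<in> mixtures g\<close> by (auto simp: mixtures_def)
  then obtain c \<sigma> \<mu> where h: "h = (\<lambda>x. \<Sum>i<m. c i * inverse (\<sigma> i) ^ DIM('a) * g (inverse (\<sigma> i) *\<^sub>R (x - \<mu> i)))"
    and \<sigma>: "\<forall>i<m. 0 < \<sigma> i"
    by (auto simp: mixtures_m_def)
  show ?thesis
    unfolding h mult.assoc using \<sigma>
    by (intro Bochner_Integration.integrable_sum Bochner_Integration.integrable_mult_right
        integrable_pdf is_pdf_affine \<open>is_pdf g\<close>) auto
qed

lemma abs_integral_diff_le_nn_integral:
  fixes u v :: "'b \<Rightarrow> real"
  assumes [measurable]: "u \<in> borel_measurable M" "v \<in> borel_measurable M"
  shows "ennreal \<bar>(\<integral>y. u y \<partial>M) - (\<integral>y. v y \<partial>M)\<bar> \<le> (\<integral>\<^sup>+y. ennreal \<bar>u y - v y\<bar> \<partial>M)"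
proof (cases "integrable M (\<lambda>y. u y - v y)")
  case False
  then show ?thesis
    by (simp add: integrable_iff_bounded less_top[symmetric])
next
  case diff: True
  show ?thesis
  proof (cases "integrable M u")
    case True
    then have "integrable M v"
      using Bochner_Integration.integrable_diff[OF True diff] by simp
    then show ?thesis
      using integral_norm_bound_ennreal[OF diff] True by simp
  next
    case False
    then have "\<not> integrable M v"
      using Bochner_Integration.integrable_add[OF _ diff, of v] by auto
    then show ?thesis
      using False by (simp add: not_integrable_integral_eq)
  qed
qed

lemma nn_integral_abs_integral_diff_le:
  fixes a b :: "'a::euclidean_space \<Rightarrow> 'a \<Rightarrow> real"
  assumes [measurable]: "case_prod a \<in> borel_measurable (lborel \<Otimes>\<^sub>M lborel)"
    "case_prod b \<in> borel_measurable (lborel \<Otimes>\<^sub>M lborel)"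
  shows "(\<integral>\<^sup>+x. ennreal \<bar>(\<integral>y. a x y \<partial>lborel) - (\<integral>y. b x y \<partial>lborel)\<bar> \<partial>lborel)
    \<le> (\<integral>\<^sup>+y. (\<integral>\<^sup>+x. ennreal \<bar>a x y - b x y\<bar> \<partial>lborel) \<partial>lborel)"
proof -
  have "(\<integral>\<^sup>+x. ennreal \<bar>(\<integral>y. a x y \<partial>lborel) - (\<integral>y. b x y \<partial>lborel)\<bar> \<partial>lborel)
      \<le> (\<integral>\<^sup>+x. (\<integral>\<^sup>+y. ennreal \<bar>a x y - b x y\<bar> \<partial>lborel) \<partial>lborel)"
    by (intro nn_integral_mono abs_integral_diff_le_nn_integral) measurable
  also have "\<dots> = (\<integral>\<^sup>+y. (\<integral>\<^sup>+x. ennreal \<bar>a x y - b x y\<bar> \<partial>lborel) \<partial>lborel)"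
    by (rule lborel_pair.Fubini'[symmetric]) measurable
  finally show ?thesis .
qed

lemma nn_integral_conv_le:
  fixes G f :: "'a::euclidean_space \<Rightarrow> real"
  assumes [measurable]: "G \<in> borel_measurable borel" "f \<in> borel_measurable borel"
  shows "(\<integral>\<^sup>+x. ennreal \<bar>conv G f x\<bar> \<partial>lborel)
    \<le> (\<integral>\<^sup>+x. ennreal \<bar>G x\<bar> \<partial>lborel) * (\<integral>\<^sup>+y. ennreal \<bar>f y\<bar> \<partial>lborel)"
proof -
  have "(\<integral>\<^sup>+x. ennreal \<bar>conv G f x\<bar> \<partial>lborel)
      \<le> (\<integral>\<^sup>+y. (\<integral>\<^sup>+x. ennreal \<bar>G (x - y) * f y - 0\<bar> \<partial>lborel) \<partial>lborel)"
    using nn_integral_abs_integral_diff_le[of "\<lambda>x y. G (x - y) * f y" "\<lambda>x y. 0"]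
    by (simp add: conv_def)
  also have "\<dots> = (\<integral>\<^sup>+y. (\<integral>\<^sup>+x. ennreal \<bar>G x\<bar> \<partial>lborel) * ennreal \<bar>f y\<bar> \<partial>lborel)"
  proof (rule nn_integral_cong)
    fix y :: 'a
    have "(\<integral>\<^sup>+x. ennreal \<bar>G (x - y) * f y - 0\<bar> \<partial>lborel)
        = (\<integral>\<^sup>+x. ennreal \<bar>G (x + - y)\<bar> * ennreal \<bar>f y\<bar> \<partial>lborel)"
      by (simp add: abs_mult ennreal_mult)
    also have "\<dots> = (\<integral>\<^sup>+x. ennreal \<bar>G (x + - y)\<bar> \<partial>lborel) * ennreal \<bar>f y\<bar>"
      by (rule nn_integral_multc) measurable
    also have "(\<integral>\<^sup>+x. ennreal \<bar>G (x + - y)\<bar> \<partial>lborel) = (\<integral>\<^sup>+x. ennreal \<bar>G x\<bar> \<partial>lborel)"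
      by (rule nn_integral_lborel_translate[where u="\<lambda>x. ennreal \<bar>G x\<bar>"]) measurable
    finally show "(\<integral>\<^sup>+x. ennreal \<bar>G (x - y) * f y - 0\<bar> \<partial>lborel)
        = (\<integral>\<^sup>+x. ennreal \<bar>G x\<bar> \<partial>lborel) * ennreal \<bar>f y\<bar>" .
  qed
  also have "\<dots> = (\<integral>\<^sup>+x. ennreal \<bar>G x\<bar> \<partial>lborel) * (\<integral>\<^sup>+y. ennreal \<bar>f y\<bar> \<partial>lborel)"
    by (rule nn_integral_cmult) measurable
  finally show ?thesis .
qed

lemma integrable_conv:
  fixes G f :: "'a::euclidean_space \<Rightarrow> real"
  assumes "integrable lborel G" "integrable lborel f"
  shows "integrable lborel (conv G f)"
proof -
  have [measurable]: "G \<in> borel_measurable borel" "f \<in> borel_measurable borel"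
    using assms by auto
  have "(\<integral>\<^sup>+x. ennreal \<bar>G x\<bar> \<partial>lborel) * (\<integral>\<^sup>+y. ennreal \<bar>f y\<bar> \<partial>lborel) < \<infinity>"
    using assms by (simp add: integrable_iff_bounded ennreal_mult_less_top)
  then have "(\<integral>\<^sup>+x. ennreal \<bar>conv G f x\<bar> \<partial>lborel) < \<infinity>"
    using nn_integral_conv_le[of G f] by simp
  then show ?thesis
    unfolding integrable_iff_bounded conv_def by simp measurable
qed

lemma nn_integral_conv_displaced_le:
  fixes G f :: "'a::euclidean_space \<Rightarrow> real" and \<psi> :: "'a \<Rightarrow> 'a"
  assumes [measurable]: "G \<in> borel_measurable borel" "f \<in> borel_measurable borel"
    "\<psi> \<in> borel_measurable borel"
  shows "(\<integral>\<^sup>+x. ennreal \<bar>conv G f x - (\<integral>y. G (x - \<psi> y) * f y \<partial>lborel)\<bar> \<partial>lborel)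
    \<le> (\<integral>\<^sup>+y. ennreal \<bar>f y\<bar> * L1_shift G (y - \<psi> y) \<partial>lborel)"
proof -
  have "(\<integral>\<^sup>+x. ennreal \<bar>conv G f x - (\<integral>y. G (x - \<psi> y) * f y \<partial>lborel)\<bar> \<partial>lborel)
      \<le> (\<integral>\<^sup>+y. (\<integral>\<^sup>+x. ennreal \<bar>G (x - y) * f y - G (x - \<psi> y) * f y\<bar> \<partial>lborel) \<partial>lborel)"
    unfolding conv_def by (rule nn_integral_abs_integral_diff_le) measurable
  also have "\<dots> = (\<integral>\<^sup>+y. ennreal \<bar>f y\<bar> * L1_shift G (y - \<psi> y) \<partial>lborel)"
  proof (rule nn_integral_cong)
    fix y :: 'a
    have "(\<integral>\<^sup>+x. ennreal \<bar>G (x - y) * f y - G (x - \<psi> y) * f y\<bar> \<partial>lborel)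
        = (\<integral>\<^sup>+x. ennreal \<bar>f y\<bar> * ennreal \<bar>G (x + - y + (y - \<psi> y)) - G (x + - y)\<bar> \<partial>lborel)"
      by (intro nn_integral_cong)
        (simp add: ennreal_mult[symmetric] abs_mult[symmetric] algebra_simps abs_minus_commute)
    also have "\<dots> = ennreal \<bar>f y\<bar> * (\<integral>\<^sup>+x. ennreal \<bar>G (x + - y + (y - \<psi> y)) - G (x + - y)\<bar> \<partial>lborel)"
      by (rule nn_integral_cmult) measurable
    also have "(\<integral>\<^sup>+x. ennreal \<bar>G (x + - y + (y - \<psi> y)) - G (x + - y)\<bar> \<partial>lborel) = L1_shift G (y - \<psi> y)"
      unfolding L1_shift_def
      by (rule nn_integral_lborel_translate[where u="\<lambda>x. ennreal \<bar>G (x + (y - \<psi> y)) - G x\<bar>"]) measurable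
    finally show "(\<integral>\<^sup>+x. ennreal \<bar>G (x - y) * f y - G (x - \<psi> y) * f y\<bar> \<partial>lborel)
        = ennreal \<bar>f y\<bar> * L1_shift G (y - \<psi> y)" .
  qed
  finally show ?thesis .
qed

lemma tendsto_L1_conv_displaced:
  fixes G f :: "'a::euclidean_space \<Rightarrow> real" and \<phi> :: "nat \<Rightarrow> 'a \<Rightarrow> 'a"
  assumes G: "integrable lborel G" and f: "integrable lborel f"
    and [measurable]: "\<And>i. \<phi> i \<in> borel_measurable borel"
    and \<phi>: "\<And>y. (\<lambda>i. \<phi> i y) \<longlonglongrightarrow> y"
  shows "(\<lambda>i. \<integral>x. \<bar>conv G f x - (\<integral>y. G (x - \<phi> i y) * f y \<partial>lborel)\<bar> \<partial>lborel) \<longlonglongrightarrow> 0"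
proof -
  have [measurable]: "G \<in> borel_measurable borel" "f \<in> borel_measurable borel"
    using G f by auto
  have [measurable]: "L1_shift G \<in> borel_measurable borel"
    unfolding L1_shift_def[abs_def] by measurable
  define I where "I = (\<integral>\<^sup>+x. ennreal \<bar>G x\<bar> \<partial>lborel)"
  have "I < \<infinity>" "(\<integral>\<^sup>+y. ennreal \<bar>f y\<bar> \<partial>lborel) < \<infinity>"
    using G f by (simp_all add: I_def integrable_iff_bounded)
  have bound: "(\<lambda>i. \<integral>\<^sup>+y. ennreal \<bar>f y\<bar> * L1_shift G (y - \<phi> i y) \<partial>lborel) \<longlonglongrightarrow> (\<integral>\<^sup>+y. 0 \<partial>(lborel :: 'a measure))"
  proof (rule nn_integral_dominated_convergence[where w="\<lambda>y. ennreal \<bar>f y\<bar> * (2 * I)"])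
    show "AE y in lborel. ennreal \<bar>f y\<bar> * L1_shift G (y - \<phi> i y) \<le> ennreal \<bar>f y\<bar> * (2 * I)" for i
      using L1_shift_le_L1_dist[of G "\<lambda>_. 0"] by (auto simp: I_def L1_shift_def intro!: mult_left_mono)
    show "(\<integral>\<^sup>+y. ennreal \<bar>f y\<bar> * (2 * I) \<partial>lborel) < \<infinity>"
      using \<open>I < \<infinity>\<close> \<open>(\<integral>\<^sup>+y. ennreal \<bar>f y\<bar> \<partial>lborel) < \<infinity>\<close>
      by (simp add: nn_integral_multc ennreal_mult_less_top)
    have "(\<lambda>i. y - \<phi> i y) \<longlonglongrightarrow> 0" for y
      using tendsto_diff[OF tendsto_const \<phi>, of y y] by simp
    then have "(\<lambda>i. L1_shift G (y - \<phi> i y)) \<longlonglongrightarrow> 0" for y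
      using isCont_tendsto_compose[OF isCont_L1_shift[OF G]] by fastforce
    from ennreal_tendsto_cmult[OF _ this, of "ennreal \<bar>f y\<bar>" y for y]
    show "AE y in lborel. (\<lambda>i. ennreal \<bar>f y\<bar> * L1_shift G (y - \<phi> i y)) \<longlonglongrightarrow> 0"
      by simp
  qed measurable
  have "(\<lambda>i. \<integral>\<^sup>+x. ennreal \<bar>conv G f x - (\<integral>y. G (x - \<phi> i y) * f y \<partial>lborel)\<bar> \<partial>lborel) \<longlonglongrightarrow> 0"
    by (rule tendsto_sandwich[OF _ _ tendsto_const bound[simplified]])
      (simp_all add: nn_integral_conv_displaced_le)
  then have "(\<lambda>i. enn2real (\<integral>\<^sup>+x. ennreal \<bar>conv G f x - (\<integral>y. G (x - \<phi> i y) * f y \<partial>lborel)\<bar> \<partial>lborel))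
      \<longlonglongrightarrow> 0"
    using tendsto_enn2real[of _ 0] by simp
  moreover have [measurable]: "conv G f \<in> borel_measurable borel"
    unfolding conv_def by measurable
  ultimately show ?thesis
    by (subst integral_eq_nn_integral) auto
qed

lemma integral_simple_function_mult:
  fixes f :: "'b \<Rightarrow> real" and H :: "'c \<Rightarrow> real"
  assumes \<phi>: "simple_function M \<phi>" and f: "integrable M f"
  shows "(\<integral>y. H (\<phi> y) * f y \<partial>M)
    = (\<Sum>v\<in>\<phi> ` space M. H v * (\<integral>y. f y * indicator (\<phi> -` {v} \<inter> space M) y \<partial>M))"
proof -
  have "(\<integral>y. H (\<phi> y) * f y \<partial>M)
      = (\<integral>y. (\<Sum>v\<in>\<phi> ` space M. H v * (f y * indicator (\<phi> -` {v} \<inter> space M) y)) \<partial>M)"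
  proof (rule Bochner_Integration.integral_cong[OF refl])
    fix y
    assume "y \<in> space M"
    then have "(\<Sum>v\<in>\<phi> ` space M. H v * (f y * indicator (\<phi> -` {v} \<inter> space M) y))
        = (\<Sum>v\<in>\<phi> ` space M. if v = \<phi> y then H (\<phi> y) * f y else 0)"
      by (intro sum.cong) (auto simp: indicator_def)
    also have "\<dots> = H (\<phi> y) * f y"
      using simple_functionD(1)[OF \<phi>] \<open>y \<in> space M\<close> by simp
    finally show "H (\<phi> y) * f y
        = (\<Sum>v\<in>\<phi> ` space M. H v * (f y * indicator (\<phi> -` {v} \<inter> space M) y))" ..
  qed
  also have "\<dots> = (\<Sum>v\<in>\<phi> ` space M. H v * (\<integral>y. f y * indicator (\<phi> -` {v} \<inter> space M) y \<partial>M))"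
    using simple_functionD(2)[OF \<phi>] f
    by (simp add: Bochner_Integration.integral_sum integrable_real_mult_indicator)
  finally show ?thesis .
qed

lemma sum_translates_dilate_in_mixtures:
  fixes g :: "'a::euclidean_space \<Rightarrow> real"
  assumes "finite V" "\<And>v. v \<in> V \<Longrightarrow> 0 \<le> w v" "(\<Sum>v\<in>V. w v) = 1" "k > 0"
  shows "(\<lambda>x. \<Sum>v\<in>V. w v * dilate k g (x - v)) \<in> mixtures g"
proof -
  obtain e where e: "bij_betw e {..<card V} V"
    using ex_bij_betw_nat_finite[OF \<open>finite V\<close>] by (auto simp: atLeast0LessThan)
  have "(\<lambda>x. \<Sum>v\<in>V. w v * dilate k g (x - v))
      = (\<lambda>x. \<Sum>i<card V. w (e i) * inverse (1/k) ^ DIM('a) * g (inverse (1/k) *\<^sub>R (x - e i)))"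
  proof
    fix x
    show "(\<Sum>v\<in>V. w v * dilate k g (x - v))
        = (\<Sum>i<card V. w (e i) * inverse (1/k) ^ DIM('a) * g (inverse (1/k) *\<^sub>R (x - e i)))"
      using sum.reindex_bij_betw[OF e, of "\<lambda>v. w v * dilate k g (x - v)"]
      by (simp add: dilate_def mult.assoc)
  qed
  moreover have "\<forall>i<card V. 0 < 1/k \<and> 0 \<le> w (e i)"
    using assms(2,4) bij_betwE[OF e] by auto
  moreover have "(\<Sum>i<card V. w (e i)) = 1"
    using sum.reindex_bij_betw[OF e, of w] assms(3) by simp
  ultimately have "(\<lambda>x. \<Sum>v\<in>V. w v * dilate k g (x - v)) \<in> mixtures_m (card V) g"
    unfolding mixtures_m_def by (intro CollectI exI conjI)
  then show ?thesis
    unfolding mixtures_def by blast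
qed

lemma displaced_conv_in_mixtures:
  fixes f g :: "'a::euclidean_space \<Rightarrow> real"
  assumes f: "is_pdf f" and "k > 0" and \<phi>: "simple_function lborel \<phi>"
  shows "(\<lambda>x. \<integral>y. dilate k g (x - \<phi> y) * f y \<partial>lborel) \<in> mixtures g"
proof -
  define w where "w v = (\<integral>y. f y * indicator (\<phi> -` {v}) y \<partial>lborel)" for v
  have discrete: "(\<integral>y. H (\<phi> y) * f y \<partial>lborel) = (\<Sum>v\<in>range \<phi>. w v * H v)" for H
    using integral_simple_function_mult[OF \<phi> integrable_pdf[OF f], of H]
    by (simp add: w_def mult.commute)
  have "(\<lambda>x. \<integral>y. dilate k g (x - \<phi> y) * f y \<partial>lborel) = (\<lambda>x. \<Sum>v\<in>range \<phi>. w v * dilate k g (x - v))"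
    by (rule ext, rule discrete)
  moreover have "(\<Sum>v\<in>range \<phi>. w v) = 1"
    using discrete[of "\<lambda>_. 1"] integral_pdf[OF f] by simp
  moreover have "0 \<le> w v" for v
    unfolding w_def using is_pdfD(2)[OF f] by simp
  ultimately show ?thesis
    using simple_functionD(1)[OF \<phi>] \<open>k > 0\<close> by (simp add: sum_translates_dilate_in_mixtures)
qed

lemma conv_dilate_tendsto_mixtures:
  fixes f g :: "'a::euclidean_space \<Rightarrow> real"
  assumes f: "is_pdf f" and "is_pdf g" and "k > 0"
  shows "\<exists>hs. (\<forall>m. hs m \<in> mixtures g) \<and>
    (\<lambda>m. \<integral>x. \<bar>conv (dilate k g) f x - hs m x\<bar> \<partial>lborel) \<longlonglongrightarrow> 0"
proof -
  obtain \<phi> :: "nat \<Rightarrow> 'a \<Rightarrow> 'a" where \<phi>: "\<And>i. simple_function lborel (\<phi> i)"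
    and \<phi>_lim: "\<And>y. (\<lambda>i. \<phi> i y) \<longlonglongrightarrow> y"
    using borel_measurable_implies_sequence_metric[of id lborel 0] by auto
  have \<phi>_measurable: "\<phi> i \<in> borel_measurable borel" for i
    using borel_measurable_simple_function[OF \<phi>] by simp
  have G: "integrable lborel (dilate k g)"
    using integrable_pdf is_pdf_dilate \<open>is_pdf g\<close> \<open>k > 0\<close> by blast
  show ?thesis
  proof (intro exI conjI allI)
    show "(\<lambda>x. \<integral>y. dilate k g (x - \<phi> i y) * f y \<partial>lborel) \<in> mixtures g" for i
      using displaced_conv_in_mixtures[OF f \<open>k > 0\<close> \<phi>] .
    show "(\<lambda>i. \<integral>x. \<bar>conv (dilate k g) f x - (\<integral>y. dilate k g (x - \<phi> i y) * f y \<partial>lborel)\<bar> \<partial>lborel)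
        \<longlonglongrightarrow> 0"
      using tendsto_L1_conv_displaced[OF G integrable_pdf[OF f] \<phi>_measurable \<phi>_lim] .
  qed
qed

theorem lemma5:
  fixes f g :: "'a::euclidean_space \<Rightarrow> real"
  assumes "is_pdf f" and "is_pdf g"
  shows "(\<forall>h\<in>mixtures g. integrable lborel h)
    \<and> (\<forall>k>0. integrable lborel (conv (dilate k g) f))
    \<and> (\<forall>k>0. \<exists>hs :: nat \<Rightarrow> 'a \<Rightarrow> real. (\<forall>m. hs m \<in> mixtures g) \<and>
          (\<lambda>m. \<integral> x. \<bar>conv (dilate k g) f x - hs m x\<bar> \<partial>lborel) \<longlonglongrightarrow> 0)"
proof (intro conjI allI impI ballI)
  show "integrable lborel h" if "h \<in> mixtures g" for h
    using integrable_mixture[OF \<open>is_pdf g\<close> that] .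
  show "integrable lborel (conv (dilate k g) f)" if "k > 0" for k :: real
    using integrable_conv integrable_pdf is_pdf_dilate assms that by blast
  show "\<exists>hs. (\<forall>m. hs m \<in> mixtures g) \<and>
      (\<lambda>m. \<integral>x. \<bar>conv (dilate k g) f x - hs m x\<bar> \<partial>lborel) \<longlonglongrightarrow> 0" if "k > 0" for k :: real
    using conv_dilate_tendsto_mixtures[OF assms that] .
qed

end
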